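(* Let $V$ be a finite dimensional vector space over a field $\mathbb{K}$ of characteristic zero, and let $z$ be an element of $V\setminus\{0\}$ or of $\wedge^2V\setminus\{0\}$. Then $$\{a\in\widehat T:\ [z,a]\in\widehat L\}=\widehat L+\mathbb{K}[[z]].$$
   Context: $\widehat T=\prod_{m\ge0}V^{\otimes m}$ is the completed tensor algebra and $\widehat L\subset\widehat T$ the completed free Lie algebra on $V$; $\wedge^2V$ is viewed inside $V^{\otimes 2}$ as antisymmetric tensors; $\mathbb{K}[[z]]\subset\widehat T$ is the set of series $\sum_kc_kz^k$, $c_k\in\mathbb{K}$. *)

theory Defs
  imports Main
begin

text \<open>V = K^B with basis indexed by the finite type 'b. An element of the completed
tensor algebra is a noncommutative formal power series: a function from words
(lists of basis indices) to coefficients; words of length m index the standard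
basis of V^{tensor m}.\<close>

type_synonym ('a, 'b) ser = "'b list \<Rightarrow> 'a"

definition ser_zero :: "('a::zero, 'b) ser" where
  "ser_zero = (\<lambda>w. 0)"

definition ser_one :: "('a::{zero,one}, 'b) ser" where
  "ser_one = (\<lambda>w. if w = [] then 1 else 0)"

definition ser_add :: "('a::plus, 'b) ser \<Rightarrow> ('a, 'b) ser \<Rightarrow> ('a, 'b) ser" where
  "ser_add a b = (\<lambda>w. a w + b w)"

definition ser_smul :: "'a::times \<Rightarrow> ('a, 'b) ser \<Rightarrow> ('a, 'b) ser" where
  "ser_smul c a = (\<lambda>w. c * a w)"

definition ser_mul :: "('a::comm_ring_1, 'b) ser \<Rightarrow> ('a, 'b) ser \<Rightarrow> ('a, 'b) ser" where
  "ser_mul a b = (\<lambda>w. \<Sum>i\<le>length w. a (take i w) * b (drop i w))"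

definition ser_pow :: "('a::comm_ring_1, 'b) ser \<Rightarrow> nat \<Rightarrow> ('a, 'b) ser" where
  "ser_pow z k = ((ser_mul z) ^^ k) ser_one"

definition ser_bracket :: "('a::comm_ring_1, 'b) ser \<Rightarrow> ('a, 'b) ser \<Rightarrow> ('a, 'b) ser" where
  "ser_bracket a b = (\<lambda>w. ser_mul a b w - ser_mul b a w)"

definition letter :: "'b \<Rightarrow> ('a::{zero,one}, 'b) ser" where
  "letter i = (\<lambda>w. if w = [i] then 1 else 0)"

text \<open>Lie polynomials: the Lie subalgebra of the (uncompleted) tensor algebra
generated by V, i.e. the free Lie algebra on V.\<close>
inductive_set lie_polys :: "('a::comm_ring_1, 'b) ser set" where
  lp_letter: "letter i \<in> lie_polys"
| lp_zero: "ser_zero \<in> lie_polys"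
| lp_add: "a \<in> lie_polys \<Longrightarrow> b \<in> lie_polys \<Longrightarrow> ser_add a b \<in> lie_polys"
| lp_smul: "a \<in> lie_polys \<Longrightarrow> ser_smul c a \<in> lie_polys"
| lp_bracket: "a \<in> lie_polys \<Longrightarrow> b \<in> lie_polys \<Longrightarrow> ser_bracket a b \<in> lie_polys"

definition homog :: "nat \<Rightarrow> ('a::zero, 'b) ser \<Rightarrow> ('a, 'b) ser" where
  "homog m a = (\<lambda>w. if length w = m then a w else 0)"

definition Lhat :: "('a::comm_ring_1, 'b) ser set" where
  "Lhat = {a. \<forall>m. homog m a \<in> lie_polys}"

text \<open>K[[z]] = { sum_k c_k z^k }.  For z of positive degree, z^k is supported on
words of length \<ge> k, so the coefficient of w only involves k \<le> length w.\<close>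
definition power_series_in :: "('a::comm_ring_1, 'b) ser \<Rightarrow> ('a, 'b) ser set" where
  "power_series_in z = {(\<lambda>w. \<Sum>k\<le>length w. c k * ser_pow z k w) | c :: nat \<Rightarrow> 'a. True}"

definition nonzero_in_V :: "('a::zero, 'b) ser \<Rightarrow> bool" where
  "nonzero_in_V z \<longleftrightarrow> (\<forall>w. length w \<noteq> 1 \<longrightarrow> z w = 0) \<and> z \<noteq> ser_zero"

definition nonzero_in_wedge2 :: "('a::ab_group_add, 'b) ser \<Rightarrow> bool" where
  "nonzero_in_wedge2 z \<longleftrightarrow> (\<forall>w. length w \<noteq> 2 \<longrightarrow> z w = 0) \<and>
     (\<forall>i j. z [i, j] = - z [j, i]) \<and> z \<noteq> ser_zero"

end

theory Submission
  imports Defs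
begin

text \<open>
  Work one degree at a time; z is homogeneous of degree d, with d = 1 or d = 2. Let r be the
  Dynkin map sending a word to its right-normed bracket and D the algebra homomorphism from the
  tensor algebra to its endomorphisms extending ad on V. For a Lie element p of degree n one has
  D(p) = ad p and r(p) = n p (Dynkin-Specht-Wever). Let a be homogeneous of degree m > 0 with
  b = [z, a] a Lie element, and put \<psi> = D(a) z. Applying D to b gives [b, z] = [z, \<psi>], so
  \<psi> + b is a Lie element of degree m + d commuting with z. The centralizer of z in each degree
  is spanned by a power of z (and is zero in odd degrees when z is antisymmetric of degree 2), so
  \<psi> + b = c z^k with k \<ge> 2; r kills z^k, whence \<psi> = -b. Applying r to b now gives
  m b = [z, r(a)], so m a - r(a) commutes with z and a = r(a)/m + c z^(m/d), where r(a)/m is a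
  Lie element.
\<close>

section \<open>Homogeneous series and the concatenation product\<close>

definition homogeneous :: "nat \<Rightarrow> ('a::zero, 'b) ser \<Rightarrow> bool" where
  "homogeneous d a \<longleftrightarrow> (\<forall>w. length w \<noteq> d \<longrightarrow> a w = 0)"

lemma homogeneous_homog: "homogeneous n (homog n a)"
  by (simp add: homogeneous_def homog_def)

lemma homog_homog: "homog n (homog n a) = homog n a"
  by (auto simp: homog_def)

lemma homogeneous_ser_one: "homogeneous 0 ser_one"
  by (simp add: homogeneous_def ser_one_def)

lemma ser_mul_assoc:
  fixes a b c :: "('a::comm_ring_1, 'b) ser"
  shows "ser_mul (ser_mul a b) c = ser_mul a (ser_mul b c)"
proof (rule ext)
  fix w :: "'b list"
  define n where "n = length w"
  define G where "G j k = a (take j w) * b (take k (drop j w)) * c (drop (j + k) w)" for j k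
  have "ser_mul (ser_mul a b) c w = (\<Sum>i\<le>n. \<Sum>j\<le>i. G j (i - j))"
    unfolding ser_mul_def n_def[symmetric]
    by (intro sum.cong refl) (auto simp: sum_distrib_right G_def n_def min_def take_drop add.commute)
  also have "\<dots> = (\<Sum>(j, k)\<in>{(j, k). j + k \<le> n}. G j k)"
    by (rule sum.triangle_reindex_eq[symmetric])
  also have "{(j, k). j + k \<le> n} = Sigma {..n} (\<lambda>j. {..n - j})"
    by auto
  also have "(\<Sum>(j, k)\<in>Sigma {..n} (\<lambda>j. {..n - j}). G j k) = (\<Sum>j\<le>n. \<Sum>k\<le>n - j. G j k)"
    by (rule sum.Sigma[symmetric]) auto
  also have "\<dots> = ser_mul a (ser_mul b c) w"
    unfolding ser_mul_def n_def[symmetric]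
    by (intro sum.cong refl) (auto simp: sum_distrib_left G_def n_def mult.assoc add.commute)
  finally show "ser_mul (ser_mul a b) c w = ser_mul a (ser_mul b c) w" .
qed

lemma ser_mul_homogeneous_left:
  fixes a b :: "('a::comm_ring_1, 'b) ser"
  assumes "homogeneous p a"
  shows "ser_mul a b w = (if p \<le> length w then a (take p w) * b (drop p w) else 0)"
proof -
  have "ser_mul a b w = (\<Sum>i\<le>length w. if i = p then a (take i w) * b (drop i w) else 0)"
    unfolding ser_mul_def using assms by (intro sum.cong refl) (auto simp: homogeneous_def min_def)
  then show ?thesis
    by (simp add: sum.delta)
qed

lemma ser_mul_homogeneous_right:
  fixes a b :: "('a::comm_ring_1, 'b) ser"
  assumes "homogeneous q b"
  shows "ser_mul a b w =
    (if q \<le> length w then a (take (length w - q) w) * b (drop (length w - q) w) else 0)"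
proof -
  have "ser_mul a b w = (\<Sum>i\<le>length w. if i = length w - q then
          (if q \<le> length w then a (take i w) * b (drop i w) else 0) else 0)"
    unfolding ser_mul_def using assms by (intro sum.cong refl) (auto simp: homogeneous_def)
  then show ?thesis
    by (simp add: sum.delta)
qed

lemma ser_mul_homogeneous:
  fixes a b :: "('a::comm_ring_1, 'b) ser"
  assumes "homogeneous p a" "homogeneous q b"
  shows "ser_mul a b w = (if length w = p + q then a (take p w) * b (drop p w) else 0)"
  using assms(2) unfolding ser_mul_homogeneous_left[OF assms(1)] homogeneous_def by auto

lemma homogeneous_ser_mul:
  fixes a b :: "('a::comm_ring_1, 'b) ser"
  assumes "homogeneous p a" "homogeneous q b"
  shows "homogeneous (p + q) (ser_mul a b)"
  unfolding homogeneous_def using ser_mul_homogeneous[OF assms] by auto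

lemma homogeneous_ser_bracket:
  fixes a b :: "('a::comm_ring_1, 'b) ser"
  assumes "homogeneous p a" "homogeneous q b"
  shows "homogeneous (p + q) (ser_bracket a b)"
  using homogeneous_ser_mul[OF assms] homogeneous_ser_mul[OF assms(2,1)]
  unfolding homogeneous_def ser_bracket_def by (auto simp: add.commute)

lemma ser_one_mul: "ser_mul ser_one (a :: ('a::comm_ring_1, 'b) ser) = a"
  by (rule ext, subst ser_mul_homogeneous_left[OF homogeneous_ser_one]) (simp add: ser_one_def)

lemma ser_mul_one: "ser_mul (a :: ('a::comm_ring_1, 'b) ser) ser_one = a"
  by (rule ext, subst ser_mul_homogeneous_right[OF homogeneous_ser_one]) (simp add: ser_one_def)

lemma homog_ser_mul:
  fixes a b :: "('a::comm_ring_1, 'b) ser"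
  shows "homog n (ser_mul a b) = (\<lambda>w. \<Sum>i\<le>n. ser_mul (homog i a) (homog (n - i) b) w)"
proof (rule ext)
  fix w :: "'b list"
  have "(\<Sum>i\<le>n. ser_mul (homog i a) (homog (n - i) b) w)
      = (\<Sum>i\<le>n. if length w = n then a (take i w) * b (drop i w) else 0)"
    by (intro sum.cong refl, subst ser_mul_homogeneous[OF homogeneous_homog homogeneous_homog])
      (auto simp: homog_def)
  also have "\<dots> = homog n (ser_mul a b) w"
    by (simp add: homog_def ser_mul_def)
  finally show "homog n (ser_mul a b) w = (\<Sum>i\<le>n. ser_mul (homog i a) (homog (n - i) b) w)" ..
qed

lemma homog_ser_bracket:
  fixes a b :: "('a::comm_ring_1, 'b) ser"
  shows "homog n (ser_bracket a b) = (\<lambda>w. \<Sum>i\<le>n. ser_bracket (homog i a) (homog (n - i) b) w)"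
proof -
  have "homog n (ser_bracket a b) = (\<lambda>w. homog n (ser_mul a b) w - homog n (ser_mul b a) w)"
    by (auto simp: homog_def ser_bracket_def)
  also have "(\<lambda>w. \<Sum>i\<le>n. ser_mul (homog (n - i) b) (homog i a) w)
           = (\<lambda>w. \<Sum>i\<le>n. ser_mul (homog i b) (homog (n - i) a) w)"
    by (rule ext, rule sum.reindex_bij_witness[of _ "\<lambda>i. n - i" "\<lambda>i. n - i"]) auto
  then have "homog n (ser_mul b a) = (\<lambda>w. \<Sum>i\<le>n. ser_mul (homog (n - i) b) (homog i a) w)"
    by (simp add: homog_ser_mul)
  finally show ?thesis
    by (simp add: homog_ser_mul ser_bracket_def sum_subtractf)
qed

lemma homog_ser_bracket_homogeneous:
  fixes z a :: "('a::comm_ring_1, 'b) ser"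
  assumes "homogeneous d z"
  shows "homog n (ser_bracket z a) = (if d \<le> n then ser_bracket z (homog (n - d) a) else (\<lambda>w. 0))"
  by (rule ext) (auto simp: ser_bracket_def homog_def ser_mul_homogeneous_left[OF assms]
      ser_mul_homogeneous_right[OF assms])

lemma ser_pow_0: "ser_pow z 0 = ser_one"
  by (simp add: ser_pow_def)

lemma ser_pow_Suc: "ser_pow z (Suc k) = ser_mul z (ser_pow z k)"
  by (simp add: ser_pow_def)

lemma homogeneous_ser_pow:
  fixes z :: "('a::comm_ring_1, 'b) ser"
  assumes "homogeneous d z"
  shows "homogeneous (k * d) (ser_pow z k)"
proof (induction k)
  case 0
  then show ?case by (simp add: ser_pow_0 homogeneous_ser_one)
next
  case (Suc k)
  then show ?case using homogeneous_ser_mul[OF assms Suc.IH] by (simp add: ser_pow_Suc)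
qed

lemma ser_pow_commute: "ser_mul (ser_pow z k) z = ser_mul (z :: ('a::comm_ring_1, 'b) ser) (ser_pow z k)"
  by (induction k) (simp_all add: ser_pow_0 ser_pow_Suc ser_one_mul ser_mul_one ser_mul_assoc)

lemma ser_pow_Suc_right: "ser_pow z (Suc k) = ser_mul (ser_pow z k) (z :: ('a::comm_ring_1, 'b) ser)"
  by (simp add: ser_pow_Suc ser_pow_commute)

lemma ser_mul_sum_right:
  fixes a :: "('a::comm_ring_1, 'b) ser"
  shows "ser_mul a (\<lambda>w. \<Sum>v\<in>S. c v * g v w) = (\<lambda>w. \<Sum>v\<in>S. c v * ser_mul a (g v) w)"
  unfolding ser_mul_def sum_distrib_left by (rule ext, subst sum.swap) (simp add: mult_ac)

lemma ser_mul_sum_left: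
  fixes a :: "('a::comm_ring_1, 'b) ser"
  shows "ser_mul (\<lambda>w. \<Sum>v\<in>S. c v * g v w) a = (\<lambda>w. \<Sum>v\<in>S. c v * ser_mul (g v) a w)"
  unfolding ser_mul_def sum_distrib_left sum_distrib_right by (rule ext, subst sum.swap) (simp add: mult_ac)

lemma ser_mul_add_left:
  fixes a b c :: "('a::comm_ring_1, 'b) ser"
  shows "ser_mul (\<lambda>w. a w + b w) c = (\<lambda>w. ser_mul a c w + ser_mul b c w)"
  by (rule ext) (simp add: ser_mul_def algebra_simps sum.distrib)

lemma ser_mul_add_right:
  fixes a b c :: "('a::comm_ring_1, 'b) ser"
  shows "ser_mul c (\<lambda>w. a w + b w) = (\<lambda>w. ser_mul c a w + ser_mul c b w)"
  by (rule ext) (simp add: ser_mul_def algebra_simps sum.distrib)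

lemma ser_mul_diff_left:
  fixes a b c :: "('a::comm_ring_1, 'b) ser"
  shows "ser_mul (\<lambda>w. a w - b w) c = (\<lambda>w. ser_mul a c w - ser_mul b c w)"
  by (rule ext) (simp add: ser_mul_def algebra_simps sum_subtractf)

lemma ser_mul_diff_right:
  fixes a b c :: "('a::comm_ring_1, 'b) ser"
  shows "ser_mul c (\<lambda>w. a w - b w) = (\<lambda>w. ser_mul c a w - ser_mul c b w)"
  by (rule ext) (simp add: ser_mul_def algebra_simps sum_subtractf)

lemma ser_mul_smul_left:
  fixes a c :: "('a::comm_ring_1, 'b) ser"
  shows "ser_mul (\<lambda>w. x * a w) c = (\<lambda>w. x * ser_mul a c w)"
  by (rule ext) (simp add: ser_mul_def algebra_simps sum_distrib_left)

lemma ser_mul_smul_right: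
  fixes a c :: "('a::comm_ring_1, 'b) ser"
  shows "ser_mul c (\<lambda>w. x * a w) = (\<lambda>w. x * ser_mul c a w)"
  by (rule ext) (simp add: ser_mul_def algebra_simps sum_distrib_left)

lemma ser_mul_zero_left: "ser_mul (\<lambda>w. 0) c = (\<lambda>w. 0 :: 'a::comm_ring_1)"
  by (rule ext) (simp add: ser_mul_def)

lemma ser_mul_zero_right: "ser_mul c (\<lambda>w. 0) = (\<lambda>w. 0 :: 'a::comm_ring_1)"
  by (rule ext) (simp add: ser_mul_def)

lemma ser_bracket_sum_right:
  fixes a :: "('a::comm_ring_1, 'b) ser"
  shows "ser_bracket a (\<lambda>w. \<Sum>v\<in>S. c v * g v w) = (\<lambda>w. \<Sum>v\<in>S. c v * ser_bracket a (g v) w)"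
  unfolding ser_bracket_def ser_mul_sum_right ser_mul_sum_left
  by (simp add: sum_subtractf right_diff_distrib)

lemma ser_bracket_add_left:
  fixes a b c :: "('a::comm_ring_1, 'b) ser"
  shows "ser_bracket (\<lambda>w. a w + b w) c = (\<lambda>w. ser_bracket a c w + ser_bracket b c w)"
  unfolding ser_bracket_def ser_mul_add_left ser_mul_add_right by (simp add: algebra_simps)

lemma ser_bracket_add_right:
  fixes a b c :: "('a::comm_ring_1, 'b) ser"
  shows "ser_bracket c (\<lambda>w. a w + b w) = (\<lambda>w. ser_bracket c a w + ser_bracket c b w)"
  unfolding ser_bracket_def ser_mul_add_left ser_mul_add_right by (simp add: algebra_simps)

lemma ser_bracket_diff_right:
  fixes a b c :: "('a::comm_ring_1, 'b) ser"
  shows "ser_bracket c (\<lambda>w. a w - b w) = (\<lambda>w. ser_bracket c a w - ser_bracket c b w)"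
  unfolding ser_bracket_def ser_mul_diff_left ser_mul_diff_right by (simp add: algebra_simps)

lemma ser_bracket_smul_left:
  fixes a c :: "('a::comm_ring_1, 'b) ser"
  shows "ser_bracket (\<lambda>w. x * c w) a = (\<lambda>w. x * ser_bracket c a w)"
  unfolding ser_bracket_def ser_mul_smul_left ser_mul_smul_right by (simp add: algebra_simps)

lemma ser_bracket_smul_right:
  fixes a c :: "('a::comm_ring_1, 'b) ser"
  shows "ser_bracket a (\<lambda>w. x * c w) = (\<lambda>w. x * ser_bracket a c w)"
  unfolding ser_bracket_def ser_mul_smul_left ser_mul_smul_right by (simp add: algebra_simps)

lemma ser_bracket_zero_left: "ser_bracket (\<lambda>w. 0) (a :: ('a::comm_ring_1, 'b) ser) = (\<lambda>w. 0)"
  unfolding ser_bracket_def ser_mul_zero_left ser_mul_zero_right by simp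

lemma ser_bracket_zero_right: "ser_bracket (a :: ('a::comm_ring_1, 'b) ser) (\<lambda>w. 0) = (\<lambda>w. 0)"
  unfolding ser_bracket_def ser_mul_zero_left ser_mul_zero_right by simp

lemma ser_bracket_self: "ser_bracket (a :: ('a::comm_ring_1, 'b) ser) a = (\<lambda>w. 0)"
  unfolding ser_bracket_def by simp

lemma ser_bracket_antisym: "ser_bracket (a :: ('a::comm_ring_1, 'b) ser) b = (\<lambda>w. - ser_bracket b a w)"
  unfolding ser_bracket_def by simp

lemma ser_bracket_eq_zero_iff_commute:
  "ser_bracket a b = (\<lambda>w. 0) \<longleftrightarrow> ser_mul a b = ser_mul b (a :: ('a::comm_ring_1, 'b) ser)"
  unfolding ser_bracket_def fun_eq_iff by simp

lemma ser_bracket_jacobi: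
  fixes a b c :: "('a::comm_ring_1, 'b) ser"
  shows "ser_bracket (ser_bracket a b) c =
    (\<lambda>w. ser_bracket a (ser_bracket b c) w - ser_bracket b (ser_bracket a c) w)"
  unfolding ser_bracket_def ser_mul_diff_left ser_mul_diff_right ser_mul_assoc
  by (rule ext) (simp add: algebra_simps)

section \<open>Homogeneous Lie polynomials\<close>

inductive homog_lie :: "nat \<Rightarrow> ('a::comm_ring_1, 'b) ser \<Rightarrow> bool" where
  homog_lie_letter: "homog_lie 1 (letter i)"
| homog_lie_zero: "homog_lie n ser_zero"
| homog_lie_add: "homog_lie n a \<Longrightarrow> homog_lie n b \<Longrightarrow> homog_lie n (ser_add a b)"
| homog_lie_smul: "homog_lie n a \<Longrightarrow> homog_lie n (ser_smul c a)"
| homog_lie_bracket: "homog_lie p a \<Longrightarrow> homog_lie q b \<Longrightarrow> homog_lie (p + q) (ser_bracket a b)"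

lemma homog_lie_homogeneous: "homog_lie n a \<Longrightarrow> homogeneous n a"
proof (induction rule: homog_lie.induct)
  case (homog_lie_bracket p a q b)
  then show ?case by (intro homogeneous_ser_bracket)
qed (auto simp: homogeneous_def letter_def ser_zero_def ser_add_def ser_smul_def)

lemma homog_lie_lie_polys: "homog_lie n a \<Longrightarrow> a \<in> lie_polys"
  by (induction rule: homog_lie.induct) (auto intro: lie_polys.intros)

lemma homog_lie_degree_0: "homog_lie 0 a \<Longrightarrow> a = (\<lambda>w. 0)"
proof (induction "0::nat" a rule: homog_lie.induct)
  case (homog_lie_bracket p a q b)
  then show ?case by (simp add: ser_bracket_zero_left)
qed (simp_all add: ser_zero_def ser_add_def ser_smul_def)

lemma homog_lie_lincomb:
  assumes "finite S" "\<And>v. v \<in> S \<Longrightarrow> homog_lie n (g v)"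
  shows "homog_lie n (\<lambda>w. \<Sum>v\<in>S. c v * g v w)"
  using assms
proof (induction S rule: finite_induct)
  case empty
  then show ?case using homog_lie_zero by (simp add: ser_zero_def)
next
  case (insert x F)
  have "(\<lambda>w. \<Sum>v\<in>insert x F. c v * g v w) =
      ser_add (ser_smul (c x) (g x)) (\<lambda>w. \<Sum>v\<in>F. c v * g v w)"
    using insert by (auto simp: ser_add_def ser_smul_def)
  then show ?case
    using insert by (auto intro!: homog_lie_add homog_lie_smul)
qed

lemma homog_lie_sum:
  assumes "finite S" "\<And>v. v \<in> S \<Longrightarrow> homog_lie n (g v)"
  shows "homog_lie n (\<lambda>w. \<Sum>v\<in>S. g v w)"
  using homog_lie_lincomb[OF assms, where c = "\<lambda>_. 1"] by simp

lemma lie_polys_homog: "p \<in> lie_polys \<Longrightarrow> homog_lie n (homog n p)"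
proof (induction arbitrary: n rule: lie_polys.induct)
  case (lp_letter i)
  have "homog n (letter i) = (if n = 1 then letter i else ser_zero)"
    by (auto simp: homog_def letter_def ser_zero_def)
  then show ?case
    using homog_lie_letter homog_lie_zero by metis
next
  case lp_zero
  have "homog n ser_zero = ser_zero"
    by (auto simp: homog_def ser_zero_def)
  then show ?case
    using homog_lie_zero by metis
next
  case (lp_add a b)
  have "homog n (ser_add a b) = ser_add (homog n a) (homog n b)"
    by (auto simp: homog_def ser_add_def)
  then show ?case
    using lp_add homog_lie_add by metis
next
  case (lp_smul a c)
  have "homog n (ser_smul c a) = ser_smul c (homog n a)"
    by (auto simp: homog_def ser_smul_def)
  then show ?case
    using lp_smul homog_lie_smul by metis
next
  case (lp_bracket a b)
  have parts: "homog_lie n (ser_bracket (homog i a) (homog (n - i) b))" if "i \<le> n" for i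
    using homog_lie_bracket[OF lp_bracket.IH(1)[of i] lp_bracket.IH(2)[of "n - i"]] that by simp
  show ?case
    unfolding homog_ser_bracket by (rule homog_lie_sum) (simp_all add: parts)
qed

lemma Lhat_iff_homog_lie: "l \<in> Lhat \<longleftrightarrow> (\<forall>n. homog_lie n (homog n l))"
proof -
  have "homog n l \<in> lie_polys \<longleftrightarrow> homog_lie n (homog n l)" for n
    using lie_polys_homog[of "homog n l" n] homog_lie_lie_polys[of n "homog n l"]
    by (auto simp: homog_homog)
  then show ?thesis
    unfolding Lhat_def by simp
qed

lemma homog_lie_degree_one:
  fixes z :: "('a::comm_ring_1, 'b::finite) ser"
  assumes "homogeneous 1 z"
  shows "homog_lie 1 z"
proof -
  have "z = (\<lambda>w. \<Sum>i\<in>UNIV. z [i] * letter i w)"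
  proof (rule ext)
    fix w :: "'b list"
    show "z w = (\<Sum>i\<in>UNIV. z [i] * letter i w)"
    proof (cases "length w = 1")
      case True
      then obtain k where "w = [k]"
        by (metis One_nat_def length_0_conv length_Suc_conv)
      then show ?thesis
        by (simp add: letter_def if_distrib[of "\<lambda>t. _ * t"] sum.delta' cong: if_cong)
    next
      case False
      then show ?thesis
        using assms by (auto simp: homogeneous_def letter_def intro!: sum.neutral)
    qed
  qed
  moreover have "homog_lie 1 (\<lambda>w. \<Sum>i\<in>UNIV. z [i] * letter i w)"
    by (rule homog_lie_lincomb) (simp, rule homog_lie_letter)
  ultimately show ?thesis
    by simp
qed

lemma sum_sum_delta:
  fixes h :: "'b::finite \<Rightarrow> 'b \<Rightarrow> 'a::comm_ring_1"
  shows "(\<Sum>i\<in>UNIV. \<Sum>j\<in>UNIV. if x = i \<and> y = j then h i j else 0) = h x y"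
proof -
  have "(\<Sum>j\<in>UNIV. if x = i \<and> y = j then h i j else 0) = (if x = i then h i y else 0)" for i
    by (cases "x = i") simp_all
  then show ?thesis
    by simp
qed

lemma ser_mul_letters: "ser_mul (letter i) (letter j) w = (if w = [i, j] then 1 else (0 :: 'a::comm_ring_1))"
proof -
  have "homogeneous 1 (letter k :: ('a, 'b) ser)" for k
    by (simp add: homogeneous_def letter_def)
  from ser_mul_homogeneous[OF this this] have "ser_mul (letter i) (letter j) w =
      (if length w = 2 then letter i (take 1 w) * letter j (drop 1 w) else (0 :: 'a))"
    by simp
  also have "\<dots> = (if w = [i, j] then 1 else 0)"
    by (cases w rule: remdups_adj.cases) (auto simp: letter_def)
  finally show ?thesis .
qed

lemma homog_lie_antisymmetric:
  fixes z :: "('a::field_char_0, 'b::finite) ser"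
  assumes hz: "homogeneous 2 z" and anti: "\<forall>i j. z [i, j] = - z [j, i]"
  shows "homog_lie 2 z"
proof -
  define F where
    "F = (\<lambda>w. \<Sum>i\<in>UNIV. \<Sum>j\<in>UNIV. (z [i, j] / 2) * ser_bracket (letter i) (letter j) w)"
  have "z w = F w" for w
  proof (cases "length w = 2")
    case True
    then obtain x y where w: "w = [x, y]"
      by (auto simp: numeral_2_eq_2 length_Suc_conv)
    have br: "ser_bracket (letter i) (letter j) w =
        (if x = i \<and> y = j then 1 else 0) - (if y = i \<and> x = j then 1 else 0)" for i j
      unfolding ser_bracket_def ser_mul_letters w by simp
    have "F w = (\<Sum>i\<in>UNIV. \<Sum>j\<in>UNIV. if x = i \<and> y = j then z [i, j] / 2 else 0)
              - (\<Sum>i\<in>UNIV. \<Sum>j\<in>UNIV. if y = i \<and> x = j then z [i, j] / 2 else 0)"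
      unfolding F_def br right_diff_distrib sum_subtractf
      by (simp only: if_distrib[of "(*) _"] mult_1_right mult_zero_right)
    also have "\<dots> = z [x, y] / 2 - z [y, x] / 2"
      by (simp only: sum_sum_delta)
    also have "\<dots> = z w"
      using anti[rule_format, of y x] w by simp
    finally show ?thesis ..
  next
    case False
    then have "w \<noteq> [i, j]" for i j
      by auto
    then show ?thesis
      using hz False by (simp add: F_def homogeneous_def ser_bracket_def ser_mul_letters)
  qed
  moreover have "homog_lie 2 F"
    unfolding F_def
    by (intro homog_lie_sum homog_lie_lincomb finite_UNIV)
      (use homog_lie_bracket[OF homog_lie_letter homog_lie_letter] in \<open>simp only: one_add_one\<close>)
  ultimately show ?thesis
    by (metis ext)
qed

section \<open>The adjoint action and the Dynkin map\<close>

fun ad_word :: "'b list \<Rightarrow> ('a::comm_ring_1, 'b) ser \<Rightarrow> ('a, 'b) ser" where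
  "ad_word [] c = c"
| "ad_word (i # u) c = ser_bracket (letter i) (ad_word u c)"

lemma ad_word_append: "ad_word (u @ v) c = ad_word u (ad_word v c)"
  by (induction u) auto

lemma ad_word_sum:
  "ad_word u (\<lambda>w. \<Sum>v\<in>S. c v * g v w) = (\<lambda>w. \<Sum>v\<in>S. c v * ad_word u (g v) w)"
  by (induction u) (auto simp: ser_bracket_sum_right)

lemma ad_word_smul: "ad_word u (\<lambda>w. x * c w) = (\<lambda>w. x * ad_word u c w)"
  by (induction u) (auto simp: ser_bracket_smul_right)

lemma ad_word_zero: "ad_word u (\<lambda>w. 0 :: 'a::comm_ring_1) = (\<lambda>w. 0)"
  by (induction u) (auto simp: ser_bracket_zero_right)

lemma homog_lie_ad_word: "homog_lie k c \<Longrightarrow> homog_lie (length u + k) (ad_word u c)"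
proof (induction u)
  case (Cons i u)
  show ?case
    using homog_lie_bracket[OF homog_lie_letter Cons.IH[OF Cons.prems]] by simp
qed simp

definition right_normed :: "'b list \<Rightarrow> ('a::comm_ring_1, 'b) ser" where
  "right_normed u = (if u = [] then (\<lambda>w. 0) else ad_word (butlast u) (letter (last u)))"

lemma right_normed_append: "v \<noteq> [] \<Longrightarrow> right_normed (u @ v) = ad_word u (right_normed v)"
  by (simp add: right_normed_def butlast_append ad_word_append)

lemma homog_lie_right_normed: "homog_lie (length u) (right_normed u)"
proof (cases "u = []")
  case True
  then show ?thesis
    using homog_lie_zero by (simp add: right_normed_def ser_zero_def)
next
  case False
  have "homog_lie (length (butlast u) + 1) (ad_word (butlast u) (letter (last u)))"
    by (rule homog_lie_ad_word[OF homog_lie_letter])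
  then show ?thesis
    using False by (simp add: right_normed_def)
qed

lemma finite_lists_length: "finite {u :: 'b::finite list. length u = m}"
  using finite_lists_length_eq[OF finite_UNIV, of m] by simp

lemma sum_lists_length_add:
  "(\<Sum>x | length x = p + q. f x) =
   (\<Sum>u | length u = p. \<Sum>v | length v = q. f (u @ v :: 'b::finite list))"
proof -
  have "(\<Sum>u | length u = p. \<Sum>v | length v = q. f (u @ v))
      = (\<Sum>(u, v)\<in>{u :: 'b list. length u = p} \<times> {v. length v = q}. f (u @ v))"
    by (rule sum.cartesian_product)
  also have "\<dots> = (\<Sum>x | length x = p + q. f x)"
    by (rule sum.reindex_bij_witness[of _ "\<lambda>x. (take p x, drop p x)" "\<lambda>(u, v). u @ v"]) auto
  finally show ?thesis
    by simp
qed

definition word_linext :: "nat \<Rightarrow> ('b list \<Rightarrow> ('a::comm_ring_1, 'b) ser) \<Rightarrow> ('a, 'b) ser \<Rightarrow> ('a, 'b) ser" where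
  "word_linext m F a = (\<lambda>w. \<Sum>u | length u = m. a u * F u w)"

lemma word_linext_cong:
  "(\<And>u. length u = m \<Longrightarrow> F u = G u) \<Longrightarrow> word_linext m F a = word_linext m G a"
  unfolding word_linext_def by (intro ext sum.cong) auto

lemma word_linext_add: "word_linext m F (\<lambda>w. a w + b w) = (\<lambda>w. word_linext m F a w + word_linext m F b w)"
  unfolding word_linext_def by (simp add: sum.distrib distrib_right)

lemma word_linext_diff: "word_linext m F (\<lambda>w. a w - b w) = (\<lambda>w. word_linext m F a w - word_linext m F b w)"
  unfolding word_linext_def by (simp add: sum_subtractf left_diff_distrib)

lemma word_linext_smul: "word_linext m F (\<lambda>w. x * a w) = (\<lambda>w. x * word_linext m F a w)"
  unfolding word_linext_def by (simp add: sum_distrib_left mult.assoc)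

lemma word_linext_zero: "word_linext m F (\<lambda>w. 0) = (\<lambda>w. 0)"
  unfolding word_linext_def by simp

lemma word_linext_letter:
  "word_linext 1 F (letter i) = (F [i] :: ('a::comm_ring_1, 'b::finite) ser)"
proof -
  have "word_linext 1 F (letter i) = (\<lambda>w. \<Sum>u | length u = 1. if [i] = u then F u w else 0)"
    unfolding word_linext_def letter_def by (intro ext sum.cong) auto
  then show ?thesis
    by (simp add: finite_lists_length)
qed

lemma homog_lie_word_linext:
  assumes "\<And>u. length u = m \<Longrightarrow> homog_lie n (F u)"
  shows "homog_lie n (word_linext m F (a :: ('a::comm_ring_1, 'b::finite) ser))"
  unfolding word_linext_def by (rule homog_lie_lincomb) (simp_all add: finite_lists_length assms)

lemma word_linext_mul:
  fixes a b :: "('a::comm_ring_1, 'b::finite) ser"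
  assumes "homogeneous p a" "homogeneous q b"
  shows "word_linext (p + q) F (ser_mul a b) = word_linext p (\<lambda>u. word_linext q (\<lambda>v. F (u @ v)) b) a"
proof (rule ext)
  fix w
  have "word_linext (p + q) F (ser_mul a b) w =
      (\<Sum>u | length u = p. \<Sum>v | length v = q. ser_mul a b (u @ v) * F (u @ v) w)"
    unfolding word_linext_def by (rule sum_lists_length_add)
  also have "\<dots> = (\<Sum>u | length u = p. \<Sum>v | length v = q. a u * (b v * F (u @ v) w))"
    by (intro sum.cong refl) (simp add: ser_mul_homogeneous[OF assms])
  also have "\<dots> = word_linext p (\<lambda>u. word_linext q (\<lambda>v. F (u @ v)) b) a w"
    unfolding word_linext_def by (simp add: sum_distrib_left)
  finally show "word_linext (p + q) F (ser_mul a b) w = word_linext p (\<lambda>u. word_linext q (\<lambda>v. F (u @ v)) b) a w" .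
qed

lemma ad_word_word_linext: "ad_word u (word_linext m F a) = word_linext m (\<lambda>v. ad_word u (F v)) a"
  unfolding word_linext_def ad_word_sum ..

text \<open>The algebra homomorphism from the tensor algebra to its endomorphisms extending ad on V,
  evaluated on the degree-m component of a.\<close>

definition ad_action :: "nat \<Rightarrow> ('a::comm_ring_1, 'b) ser \<Rightarrow> ('a, 'b) ser \<Rightarrow> ('a, 'b) ser" where
  "ad_action m a c = word_linext m (\<lambda>u. ad_word u c) a"

definition dynkin :: "nat \<Rightarrow> ('a::comm_ring_1, 'b) ser \<Rightarrow> ('a, 'b) ser" where
  "dynkin m a = word_linext m right_normed a"

lemma ad_action_mul:
  fixes a b c :: "('a::comm_ring_1, 'b::finite) ser"
  assumes "homogeneous p a" "homogeneous q b"
  shows "ad_action (p + q) (ser_mul a b) c = ad_action p a (ad_action q b c)"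
  unfolding ad_action_def word_linext_mul[OF assms] ad_word_append ad_word_word_linext ..

lemma dynkin_mul:
  fixes a b :: "('a::comm_ring_1, 'b::finite) ser"
  assumes "homogeneous p a" "homogeneous q b" "1 \<le> q"
  shows "dynkin (p + q) (ser_mul a b) = ad_action p a (dynkin q b)"
proof -
  have "right_normed (u @ v) = ad_word u (right_normed v)" if "length v = q" for u v
    using that assms(3) by (intro right_normed_append) auto
  then have "word_linext q (\<lambda>v. right_normed (u @ v)) b = ad_word u (dynkin q b)" for u
    unfolding dynkin_def ad_word_word_linext by (intro word_linext_cong)
  then show ?thesis
    unfolding dynkin_def ad_action_def word_linext_mul[OF assms(1,2)] by simp
qed

lemma ad_action_smul_right: "ad_action m a (\<lambda>w. x * c w) = (\<lambda>w. x * ad_action m a c w)"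
  unfolding ad_action_def word_linext_def ad_word_smul by (simp add: sum_distrib_left mult_ac)

lemma ad_action_zero_right: "ad_action m a (\<lambda>w. 0) = (\<lambda>w. 0)"
  unfolding ad_action_def word_linext_def ad_word_zero by simp

lemma homog_lie_ad_action:
  fixes a c :: "('a::comm_ring_1, 'b::finite) ser"
  assumes "homog_lie k c"
  shows "homog_lie (m + k) (ad_action m a c)"
  unfolding ad_action_def by (rule homog_lie_word_linext) (use homog_lie_ad_word[OF assms] in auto)

lemma homog_lie_dynkin: "homog_lie m (dynkin m (a :: ('a::comm_ring_1, 'b::finite) ser))"
  unfolding dynkin_def by (rule homog_lie_word_linext) (metis homog_lie_right_normed)

lemma ad_action_homog_lie:
  fixes p c :: "('a::comm_ring_1, 'b::finite) ser"
  shows "homog_lie n p \<Longrightarrow> ad_action n p c = ser_bracket p c"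
proof (induction arbitrary: c rule: homog_lie.induct)
  case (homog_lie_letter i)
  then show ?case
    unfolding ad_action_def word_linext_letter by simp
next
  case (homog_lie_zero n)
  then show ?case
    by (simp add: ad_action_def ser_zero_def word_linext_zero ser_bracket_zero_left)
next
  case (homog_lie_add n a b)
  then show ?case
    by (simp add: ad_action_def ser_add_def word_linext_add ser_bracket_add_left)
next
  case (homog_lie_smul n a x)
  then show ?case
    by (simp add: ad_action_def ser_smul_def word_linext_smul ser_bracket_smul_left)
next
  case (homog_lie_bracket p a q b)
  have ha: "homogeneous p a" and hb: "homogeneous q b"
    using homog_lie_bracket.hyps by (auto intro: homog_lie_homogeneous)
  have "ad_action (p + q) (ser_bracket a b) c =
      (\<lambda>w. ad_action (p + q) (ser_mul a b) c w - ad_action (q + p) (ser_mul b a) c w)"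
    unfolding ser_bracket_def ad_action_def word_linext_diff by (simp add: add.commute)
  also have "\<dots> = (\<lambda>w. ser_bracket a (ser_bracket b c) w - ser_bracket b (ser_bracket a c) w)"
    unfolding ad_action_mul[OF ha hb] ad_action_mul[OF hb ha] homog_lie_bracket.IH ..
  also have "\<dots> = ser_bracket (ser_bracket a b) c"
    by (rule ser_bracket_jacobi[symmetric])
  finally show ?case .
qed

lemma dynkin_homog_lie:
  fixes p :: "('a::comm_ring_1, 'b::finite) ser"
  shows "homog_lie n p \<Longrightarrow> dynkin n p = (\<lambda>w. of_nat n * p w)"
proof (induction rule: homog_lie.induct)
  case (homog_lie_letter i)
  then show ?case
    unfolding dynkin_def word_linext_letter by (simp add: right_normed_def)
next
  case (homog_lie_zero n)
  then show ?case
    by (simp add: dynkin_def ser_zero_def word_linext_zero)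
next
  case (homog_lie_add n a b)
  then show ?case
    by (simp add: dynkin_def ser_add_def word_linext_add algebra_simps)
next
  case (homog_lie_smul n a x)
  then show ?case
    by (simp add: dynkin_def ser_smul_def word_linext_smul algebra_simps)
next
  case (homog_lie_bracket p a q b)
  show ?case
  proof (cases "p = 0 \<or> q = 0")
    case True
    then have "a = (\<lambda>w. 0) \<or> b = (\<lambda>w. 0)"
      using homog_lie_bracket.hyps homog_lie_degree_0 by blast
    then have "ser_bracket a b = (\<lambda>w. 0)"
      by (auto simp: ser_bracket_zero_left ser_bracket_zero_right)
    then show ?thesis
      by (simp add: dynkin_def word_linext_zero)
  next
    case False
    have ha: "homogeneous p a" and hb: "homogeneous q b"
      using homog_lie_bracket.hyps by (auto intro: homog_lie_homogeneous)
    have "dynkin (p + q) (ser_bracket a b) =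
        (\<lambda>w. dynkin (p + q) (ser_mul a b) w - dynkin (q + p) (ser_mul b a) w)"
      unfolding ser_bracket_def dynkin_def word_linext_diff by (simp add: add.commute)
    also have "\<dots> = (\<lambda>w. ser_bracket a (\<lambda>w. of_nat q * b w) w - ser_bracket b (\<lambda>w. of_nat p * a w) w)"
      using False
      by (simp add: dynkin_mul[OF ha hb] dynkin_mul[OF hb ha] homog_lie_bracket.IH
          ad_action_homog_lie[OF homog_lie_bracket.hyps(1)] ad_action_homog_lie[OF homog_lie_bracket.hyps(2)])
    also have "\<dots> = (\<lambda>w. of_nat (p + q) * ser_bracket a b w)"
      unfolding ser_bracket_smul_right by (subst (2) ser_bracket_antisym) (simp add: algebra_simps)
    finally show ?thesis .
  qed
qed

lemma dynkin_ser_pow_eq_0: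
  fixes z :: "('a::comm_ring_1, 'b::finite) ser"
  assumes z: "homog_lie d z" "1 \<le> d" and "2 \<le> k"
  shows "dynkin (k * d) (ser_pow z k) = (\<lambda>w. 0)"
proof -
  have hz: "homogeneous d z"
    using homog_lie_homogeneous[OF z(1)] .
  obtain j where k: "k = Suc (Suc j)"
    using \<open>2 \<le> k\<close> by (metis add_2_eq_Suc le_Suc_ex)
  have "ad_action (j * d + d) (ser_mul (ser_pow z j) z) z = ad_action (j * d) (ser_pow z j) (ad_action d z z)"
    by (rule ad_action_mul[OF homogeneous_ser_pow[OF hz] hz])
  also have "\<dots> = (\<lambda>w. 0)"
    by (simp add: ad_action_homog_lie[OF z(1)] ser_bracket_self ad_action_zero_right)
  finally have "ad_action (Suc j * d) (ser_pow z (Suc j)) z = (\<lambda>w. 0)"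
    by (simp add: ser_pow_Suc_right[of z j] add.commute)
  moreover have "dynkin (Suc j * d + d) (ser_mul (ser_pow z (Suc j)) z) =
      ad_action (Suc j * d) (ser_pow z (Suc j)) (dynkin d z)"
    by (rule dynkin_mul[OF homogeneous_ser_pow[OF hz] hz z(2)])
  ultimately show ?thesis
    using k by (simp add: dynkin_homog_lie[OF z(1)] ad_action_smul_right ser_pow_Suc_right[of z "Suc j"]
        add.commute)
qed

section \<open>Centralizers of elements of V and of wedge^2 V\<close>

lemma concat_replicate_append: "concat (replicate j v) @ v = v @ concat (replicate j v)"
  by (induction j) auto

lemma commuting_coeff_shift:
  fixes z e :: "('a::comm_ring_1, 'b) ser"
  assumes hz: "homogeneous d z" and comm: "ser_mul z e = ser_mul e z"
    and "length v = d" "d \<le> length u"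
  shows "e u * z v = z (take d u) * e (drop d u @ v)"
proof -
  have "ser_mul z e (u @ v) = ser_mul e z (u @ v)"
    using comm by simp
  then show ?thesis
    using assms(3,4)
    by (simp add: ser_mul_homogeneous_left[OF hz] ser_mul_homogeneous_right[OF hz] mult.commute)
qed

lemma commuting_coeff_shift_power:
  fixes z e :: "('a::comm_ring_1, 'b) ser"
  assumes hz: "homogeneous d z" and comm: "ser_mul z e = ser_mul e z"
    and v: "length v = d" and "j * d \<le> length u"
  shows "e u * z v ^ j = ser_pow z j (take (j * d) u) * e (drop (j * d) u @ concat (replicate j v))"
  using \<open>j * d \<le> length u\<close>
proof (induction j)
  case 0
  then show ?case
    by (simp add: ser_pow_0 ser_one_def)
next
  case (Suc j)
  define x where "x = drop (j * d) u @ concat (replicate j v)"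
  have d_le: "d \<le> length (drop (j * d) u)"
    using Suc.prems by simp
  have shift: "e x * z v =
      z (take d (drop (j * d) u)) * e (drop (Suc j * d) u @ concat (replicate (Suc j) v))"
    using commuting_coeff_shift[OF hz comm v, of x] d_le v
    by (simp add: x_def add.commute concat_replicate_append)
  have pow: "ser_pow z (Suc j) (take (Suc j * d) u) =
      ser_pow z j (take (j * d) u) * z (take d (drop (j * d) u))"
    using Suc.prems
    by (simp add: ser_pow_Suc_right ser_mul_homogeneous_right[OF hz] take_drop min_def add.commute)
  have "e u * z v ^ Suc j = (e u * z v ^ j) * z v"
    by (simp add: mult_ac)
  also have "\<dots> = ser_pow z j (take (j * d) u) * (e x * z v)"
    using Suc by (simp add: x_def mult_ac)
  also have "\<dots> = ser_pow z (Suc j) (take (Suc j * d) u) *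
      e (drop (Suc j * d) u @ concat (replicate (Suc j) v))"
    unfolding shift pow by (simp add: mult_ac)
  finally show ?case .
qed

lemma centralizer_homogeneous_dvd:
  fixes z e :: "('a::field, 'b) ser"
  assumes hz: "homogeneous d z" and v: "length v = d" "z v \<noteq> 0"
    and he: "homogeneous m e" and comm: "ser_mul z e = ser_mul e z" and "d dvd m"
  shows "\<exists>c. \<forall>w. e w = c * ser_pow z (m div d) w"
proof -
  define j where "j = m div d"
  have jd: "j * d = m"
    using \<open>d dvd m\<close> by (simp add: j_def)
  have "e w = e (concat (replicate j v)) / z v ^ j * ser_pow z j w" for w
  proof (cases "length w = m")
    case True
    then have "e w * z v ^ j = ser_pow z j w * e (concat (replicate j v))"
      using commuting_coeff_shift_power[OF hz comm v(1), of j w] jd by simp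
    then show ?thesis
      using v(2) by (simp add: field_simps)
  next
    case False
    then show ?thesis
      using he homogeneous_ser_pow[OF hz, of j] jd by (simp add: homogeneous_def)
  qed
  then show ?thesis
    unfolding j_def by blast
qed

text \<open>Shifting the factor z [k, l] through e reduces every coefficient of e to one of the form
  e (t # [k, l, ..., k, l]), and antisymmetry forces these to vanish.\<close>

lemma centralizer_antisymmetric_odd:
  fixes z e :: "('a::field_char_0, 'b) ser"
  assumes hz: "homogeneous 2 z" and anti: "\<forall>i j. z [i, j] = - z [j, i]" and kl: "z [k, l] \<noteq> 0"
    and he: "homogeneous m e" and comm: "ser_mul z e = ser_mul e z" and "odd m"
  shows "e = (\<lambda>w. 0)"
proof -
  define g where "g = z [k, l]"
  define P where "P j = concat (replicate j [k, l])" for j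
  define j where "j = m div 2"
  have m: "m = 2 * j + 1"
    using \<open>odd m\<close> by (simp add: j_def)
  have shift: "e u * g = z (take 2 u) * e (drop 2 u @ [k, l])" if "2 \<le> length u" for u
    using commuting_coeff_shift[OF hz comm, of "[k, l]" u] that by (simp add: g_def)
  have zlk: "z [l, k] = - g"
    using anti[rule_format, of l k] by (simp add: g_def)
  have key: "e (t # P j) = 0" for t
  proof (cases j)
    case 0
    have "ser_mul z e [k, l, t] = ser_mul e z [k, l, t]" for t
      using comm by simp
    then have coeff: "g * e [t] = e [k] * z [l, t]" for t
      using hz m 0 by (simp add: ser_mul_homogeneous_left ser_mul_homogeneous_right g_def numeral_2_eq_2)
    have "2 * g * e [k] = 0"
      using coeff[of k] zlk by (simp add: algebra_simps)
    then have "e [k] = 0"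
      using kl by (simp add: g_def)
    then show ?thesis
      using coeff[of t] kl 0 by (simp add: P_def g_def)
  next
    case (Suc i)
    have P: "P j = k # l # P i" "P i @ [k, l] = P j"
      by (simp_all add: P_def Suc concat_replicate_append)
    have coeff: "e (t # P j) * g = z [t, k] * e (l # P j)" for t
      using shift[of "t # P j"] P by simp
    have "2 * g * e (l # P j) = 0"
      using coeff[of l] zlk by (simp add: algebra_simps)
    then have "e (l # P j) = 0"
      using kl by (simp add: g_def)
    then show ?thesis
      using coeff[of t] kl by (simp add: g_def)
  qed
  show ?thesis
  proof (rule ext)
    fix w :: "'b list"
    show "e w = 0"
    proof (cases "length w = m")
      case True
      then have "length (drop (j * 2) w) = 1"
        using m by simp
      then obtain t where t: "drop (j * 2) w = [t]"
        by (metis One_nat_def length_0_conv length_Suc_conv)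
      have "e w * g ^ j = 0"
        using commuting_coeff_shift_power[OF hz comm, of "[k, l]" j w] True m t key
        by (simp add: g_def P_def)
      then show ?thesis
        using kl by (simp add: g_def)
    next
      case False
      then show ?thesis
        using he by (simp add: homogeneous_def)
    qed
  qed
qed

definition powers_span_centralizer :: "nat \<Rightarrow> ('a::comm_ring_1, 'b) ser \<Rightarrow> bool" where
  "powers_span_centralizer d z \<longleftrightarrow>
    (\<forall>m e. homogeneous m e \<longrightarrow> ser_mul z e = ser_mul e z \<longrightarrow>
      (\<exists>c. \<forall>w. e w = (if d dvd m then c * ser_pow z (m div d) w else 0)))"

lemma powers_span_centralizer_degree_one:
  fixes z :: "('a::field, 'b) ser"
  assumes hz: "homogeneous 1 z" and "z \<noteq> ser_zero"
  shows "powers_span_centralizer 1 z"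
proof -
  obtain v where "z v \<noteq> 0"
    using assms(2) by (auto simp: ser_zero_def)
  moreover have "length v = 1"
    using hz calculation by (auto simp: homogeneous_def)
  ultimately show ?thesis
    unfolding powers_span_centralizer_def using centralizer_homogeneous_dvd[OF hz] by simp
qed

lemma powers_span_centralizer_antisymmetric:
  fixes z :: "('a::field_char_0, 'b) ser"
  assumes hz: "homogeneous 2 z" and anti: "\<forall>i j. z [i, j] = - z [j, i]" and "z \<noteq> ser_zero"
  shows "powers_span_centralizer 2 z"
proof -
  obtain v where v: "z v \<noteq> 0"
    using assms(3) by (auto simp: ser_zero_def)
  moreover have "length v = 2"
    using hz v by (auto simp: homogeneous_def)
  then obtain k l where "v = [k, l]"
    by (auto simp: numeral_2_eq_2 length_Suc_conv)
  ultimately have "z [k, l] \<noteq> 0"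
    by simp
  then show ?thesis
    unfolding powers_span_centralizer_def
    using centralizer_homogeneous_dvd[OF hz \<open>length v = 2\<close> v]
      centralizer_antisymmetric_odd[OF hz anti] by (metis (full_types))
qed

section \<open>Decomposing a degree by degree\<close>

text \<open>Such an e is a multiple of z^k with k \<ge> 2; the Dynkin map kills z^k but multiplies e by n.\<close>

lemma homog_lie_commuting_eq_0:
  fixes z e :: "('a::field_char_0, 'b::finite) ser"
  assumes z: "homog_lie d z" "1 \<le> d" "powers_span_centralizer d z"
    and e: "homog_lie n e" "d < n" and comm: "ser_mul z e = ser_mul e z"
  shows "e = (\<lambda>w. 0)"
proof -
  obtain c where c: "\<forall>w. e w = (if d dvd n then c * ser_pow z (n div d) w else 0)"
    using z(3) homog_lie_homogeneous[OF e(1)] comm unfolding powers_span_centralizer_def by blast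
  have "dynkin n e = (\<lambda>w. 0)"
  proof (cases "d dvd n")
    case True
    define k where "k = n div d"
    have kd: "k * d = n"
      using True by (simp add: k_def)
    have k2: "2 \<le> k"
    proof (rule ccontr)
      assume "\<not> 2 \<le> k"
      then have "k * d \<le> 1 * d"
        by (intro mult_le_mono1) simp
      then show False
        using kd \<open>d < n\<close> by simp
    qed
    have "e = (\<lambda>w. c * ser_pow z k w)"
      using c True by (simp add: k_def fun_eq_iff)
    then show ?thesis
      using dynkin_ser_pow_eq_0[OF z(1,2) k2] kd unfolding dynkin_def by (simp add: word_linext_smul)
  next
    case False
    then have "e = (\<lambda>w. 0)"
      using c by (simp add: fun_eq_iff)
    then show ?thesis
      by (simp add: dynkin_def word_linext_zero)
  qed
  then show ?thesis
    using dynkin_homog_lie[OF e(1)] \<open>d < n\<close> by (simp add: fun_eq_iff)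
qed

lemma dynkin_bracket:
  fixes z a :: "('a::comm_ring_1, 'b::finite) ser"
  assumes z: "homog_lie d z" "1 \<le> d" and a: "homogeneous m a" "1 \<le> m"
  shows "dynkin (m + d) (ser_bracket z a) =
    (\<lambda>w. ser_bracket z (dynkin m a) w - of_nat d * ad_action m a z w)"
proof -
  have hz: "homogeneous d z"
    using homog_lie_homogeneous[OF z(1)] .
  have "dynkin (m + d) (ser_bracket z a) =
      (\<lambda>w. dynkin (d + m) (ser_mul z a) w - dynkin (m + d) (ser_mul a z) w)"
    unfolding ser_bracket_def dynkin_def word_linext_diff by (simp add: add.commute)
  also have "dynkin (d + m) (ser_mul z a) = ser_bracket z (dynkin m a)"
    using dynkin_mul[OF hz a] ad_action_homog_lie[OF z(1)] by simp
  also have "dynkin (m + d) (ser_mul a z) = (\<lambda>w. of_nat d * ad_action m a z w)"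
    using dynkin_mul[OF a(1) hz z(2)] by (simp add: dynkin_homog_lie[OF z(1)] ad_action_smul_right)
  finally show ?thesis .
qed

lemma ad_action_eq_neg_bracket:
  fixes z a :: "('a::field_char_0, 'b::finite) ser"
  assumes z: "homog_lie d z" "1 \<le> d" "powers_span_centralizer d z"
    and a: "homogeneous m a" "1 \<le> m" and b: "homog_lie (m + d) (ser_bracket z a)"
  shows "ad_action m a z = (\<lambda>w. - ser_bracket z a w)"
proof -
  define b where "b = ser_bracket z a"
  define \<psi> where "\<psi> = ad_action m a z"
  have hz: "homogeneous d z"
    using homog_lie_homogeneous[OF z(1)] .
  have "ser_bracket b z = ad_action (m + d) b z"
    using ad_action_homog_lie[OF b] by (simp add: b_def)
  also have "\<dots> = (\<lambda>w. ad_action (d + m) (ser_mul z a) z w - ad_action (m + d) (ser_mul a z) z w)"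
    unfolding b_def ser_bracket_def ad_action_def word_linext_diff by (simp add: add.commute)
  also have "\<dots> = (\<lambda>w. ad_action d z \<psi> w - ad_action m a (ad_action d z z) w)"
    unfolding ad_action_mul[OF hz a(1)] ad_action_mul[OF a(1) hz] \<psi>_def ..
  also have "\<dots> = ser_bracket z \<psi>"
    by (simp add: ad_action_homog_lie[OF z(1)] ser_bracket_self ad_action_zero_right)
  finally have "ser_bracket z (\<lambda>w. \<psi> w + b w) = (\<lambda>w. ser_bracket b z w + ser_bracket z b w)"
    unfolding ser_bracket_add_right by simp
  also have "\<dots> = (\<lambda>w. 0)"
    by (subst ser_bracket_antisym) simp
  finally have "ser_mul z (\<lambda>w. \<psi> w + b w) = ser_mul (\<lambda>w. \<psi> w + b w) z"
    unfolding ser_bracket_eq_zero_iff_commute .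
  moreover have "homog_lie (m + d) (\<lambda>w. \<psi> w + b w)"
    using homog_lie_add[OF homog_lie_ad_action[OF z(1)] b] by (simp add: \<psi>_def b_def ser_add_def)
  ultimately have "(\<lambda>w. \<psi> w + b w) = (\<lambda>w. 0)"
    using homog_lie_commuting_eq_0[OF z] a(2) by simp
  then show ?thesis
    by (simp add: \<psi>_def b_def fun_eq_iff eq_neg_iff_add_eq_0)
qed

lemma homogeneous_eq_dynkin_plus_power:
  fixes z a :: "('a::field_char_0, 'b::finite) ser"
  assumes z: "homog_lie d z" "1 \<le> d" "powers_span_centralizer d z"
    and a: "homogeneous m a" "1 \<le> m" and b: "homog_lie (m + d) (ser_bracket z a)"
  shows "\<exists>c. \<forall>w. a w = dynkin m a w / of_nat m + (if d dvd m then c * ser_pow z (m div d) w else 0)"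
proof -
  have "of_nat m * ser_bracket z a w = ser_bracket z (dynkin m a) w" for w
  proof -
    have "of_nat (m + d) * ser_bracket z a w = ser_bracket z (dynkin m a) w - of_nat d * ad_action m a z w"
      using fun_cong[OF dynkin_homog_lie[OF b], of w] fun_cong[OF dynkin_bracket[OF z(1,2) a], of w]
      by simp
    then show ?thesis
      using ad_action_eq_neg_bracket[OF z a b] by (simp add: algebra_simps)
  qed
  then have "ser_bracket z (\<lambda>w. of_nat m * a w - dynkin m a w) = (\<lambda>w. 0)"
    by (simp add: ser_bracket_diff_right ser_bracket_smul_right)
  moreover have "homogeneous m (\<lambda>w. of_nat m * a w - dynkin m a w)"
    using a(1) homog_lie_homogeneous[OF homog_lie_dynkin, of m a] by (simp add: homogeneous_def)
  ultimately obtain c where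
    c: "\<forall>w. of_nat m * a w - dynkin m a w = (if d dvd m then c * ser_pow z (m div d) w else 0)"
    using z(3) unfolding powers_span_centralizer_def ser_bracket_eq_zero_iff_commute by blast
  have "a w = dynkin m a w / of_nat m + (if d dvd m then c / of_nat m * ser_pow z (m div d) w else 0)" for w
    using c[rule_format, of w] a(2) by (auto simp: field_simps)
  then show ?thesis
    by blast
qed

lemma power_series_coeff:
  fixes z :: "('a::comm_ring_1, 'b) ser"
  assumes hz: "homogeneous d z" and "1 \<le> d"
  shows "(\<Sum>k\<le>length w. c k * ser_pow z k w) =
    (if d dvd length w then c (length w div d) * ser_pow z (length w div d) w else 0)"
proof -
  have summand: "c k * ser_pow z k w =
      (if d dvd length w \<and> k = length w div d then c k * ser_pow z k w else 0)" for k
  proof (cases "length w = k * d")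
    case True
    then show ?thesis
      using \<open>1 \<le> d\<close> by simp
  next
    case False
    then have "ser_pow z k w = 0"
      using homogeneous_ser_pow[OF hz, of k] by (simp add: homogeneous_def)
    then show ?thesis
      using False \<open>1 \<le> d\<close> by (auto elim!: dvdE simp: mult.commute)
  qed
  have "(\<Sum>k\<le>length w. c k * ser_pow z k w) =
      (\<Sum>k\<le>length w. if d dvd length w \<and> k = length w div d then c k * ser_pow z k w else 0)"
    by (intro sum.cong refl summand)
  then show ?thesis
    by (cases "d dvd length w") (simp_all add: sum.delta div_le_dividend)
qed

lemma ser_bracket_power_series_eq_0:
  fixes z :: "('a::comm_ring_1, 'b) ser"
  assumes hz: "homogeneous d z" and "p \<in> power_series_in z"
  shows "ser_bracket z p = (\<lambda>w. 0)"
proof -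
  obtain c where p: "p = (\<lambda>w. \<Sum>k\<le>length w. c k * ser_pow z k w)"
    using assms(2) unfolding power_series_in_def by blast
  have "ser_mul z p w = ser_mul p z w" for w
  proof (cases "d \<le> length w")
    case True
    have "ser_mul z p w = (\<Sum>k\<le>length w - d. c k * ser_mul z (ser_pow z k) w)"
      using True by (simp add: ser_mul_homogeneous_left[OF hz] p sum_distrib_left mult_ac)
    also have "\<dots> = (\<Sum>k\<le>length w - d. c k * ser_mul (ser_pow z k) z w)"
      by (simp add: ser_pow_commute)
    also have "\<dots> = ser_mul p z w"
      using True by (simp add: ser_mul_homogeneous_right[OF hz] p sum_distrib_left sum_distrib_right mult_ac)
    finally show ?thesis .
  next
    case False
    then show ?thesis
      by (simp add: ser_mul_homogeneous_left[OF hz] ser_mul_homogeneous_right[OF hz])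
  qed
  then show ?thesis
    unfolding ser_bracket_eq_zero_iff_commute by auto
qed

lemma ser_bracket_Lhat:
  fixes z l :: "('a::comm_ring_1, 'b) ser"
  assumes z: "homog_lie d z" and "l \<in> Lhat"
  shows "ser_bracket z l \<in> Lhat"
  unfolding Lhat_iff_homog_lie
proof
  fix n
  have "homog_lie (d + (n - d)) (ser_bracket z (homog (n - d) l))"
    using homog_lie_bracket[OF z] \<open>l \<in> Lhat\<close> by (simp add: Lhat_iff_homog_lie)
  then show "homog_lie n (homog n (ser_bracket z l))"
    using homog_lie_zero
    by (auto simp: homog_ser_bracket_homogeneous[OF homog_lie_homogeneous[OF z]] ser_zero_def)
qed

lemma homog_eq_dynkin_plus_power:
  fixes z a :: "('a::field_char_0, 'b::finite) ser"
  assumes z: "homog_lie d z" "1 \<le> d" "powers_span_centralizer d z"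
    and "ser_bracket z a \<in> Lhat"
  shows "\<exists>c. \<forall>w. homog m a w = dynkin m (homog m a) w / of_nat m +
      (if d dvd m then c * ser_pow z (m div d) w else 0)"
proof (cases "m = 0")
  case True
  then show ?thesis
    by (intro exI[of _ "a []"]) (auto simp: homog_def ser_pow_0 ser_one_def)
next
  case False
  have "homog_lie (m + d) (homog (m + d) (ser_bracket z a))"
    using \<open>ser_bracket z a \<in> Lhat\<close> unfolding Lhat_iff_homog_lie ..
  then have "homog_lie (m + d) (ser_bracket z (homog m a))"
    using homog_ser_bracket_homogeneous[OF homog_lie_homogeneous[OF z(1)], of "m + d" a] by simp
  then show ?thesis
    using homogeneous_eq_dynkin_plus_power[OF z homogeneous_homog] False by simp
qed

lemma decomposition_if_ser_bracket_Lhat: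
  fixes z a :: "('a::field_char_0, 'b::finite) ser"
  assumes z: "homog_lie d z" "1 \<le> d" "powers_span_centralizer d z"
    and "ser_bracket z a \<in> Lhat"
  shows "\<exists>l p. a = ser_add l p \<and> l \<in> Lhat \<and> p \<in> power_series_in z"
proof -
  have hz: "homogeneous d z"
    using homog_lie_homogeneous[OF z(1)] .
  obtain C where C: "\<And>m w. homog m a w = dynkin m (homog m a) w / of_nat m +
      (if d dvd m then C m * ser_pow z (m div d) w else 0)"
    using homog_eq_dynkin_plus_power[OF assms] by metis
  \<comment> \<open>at the empty word the division by \<open>of_nat 0\<close> yields 0\<close>
  define l where "l = (\<lambda>w. dynkin (length w) (homog (length w) a) w / of_nat (length w))"
  define p where "p = (\<lambda>w. \<Sum>k\<le>length w. C (k * d) * ser_pow z k w)"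
  have "p \<in> power_series_in z"
    unfolding power_series_in_def p_def by (intro CollectI exI[of _ "\<lambda>k. C (k * d)"]) simp
  moreover have "l \<in> Lhat"
  proof -
    have "homog n l = ser_smul (1 / of_nat n) (dynkin n (homog n a))" for n
      using homog_lie_homogeneous[OF homog_lie_dynkin, of n "homog n a"]
      by (auto simp: homog_def l_def ser_smul_def homogeneous_def)
    then show ?thesis
      unfolding Lhat_iff_homog_lie by (simp add: homog_lie_smul homog_lie_dynkin)
  qed
  moreover have "a = ser_add l p"
  proof (rule ext)
    fix w :: "'b list"
    have "a w = homog (length w) a w"
      by (simp add: homog_def)
    also have "\<dots> = ser_add l p w"
      using C[of "length w" w] power_series_coeff[OF hz z(2), of "\<lambda>k. C (k * d)" w]
      by (simp add: ser_add_def l_def p_def)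
    finally show "a w = ser_add l p w" .
  qed
  ultimately show ?thesis
    by blast
qed

theorem lemma3p7:
  fixes z :: "('a::field_char_0, 'b::finite) ser"
  assumes "nonzero_in_V z \<or> nonzero_in_wedge2 z"
  shows "{a. ser_bracket z a \<in> Lhat} =
         {ser_add l p | l p. l \<in> Lhat \<and> p \<in> power_series_in z}"
proof -
  obtain d where z: "homog_lie d z" "1 \<le> d" "powers_span_centralizer d z"
    using assms homog_lie_degree_one powers_span_centralizer_degree_one
      homog_lie_antisymmetric powers_span_centralizer_antisymmetric
    unfolding nonzero_in_V_def nonzero_in_wedge2_def homogeneous_def
    by (metis one_le_numeral order_refl)
  show ?thesis
  proof (intro set_eqI iffI)
    fix a
    assume "a \<in> {a. ser_bracket z a \<in> Lhat}"
    then show "a \<in> {ser_add l p | l p. l \<in> Lhat \<and> p \<in> power_series_in z}"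
      using decomposition_if_ser_bracket_Lhat[OF z] by auto
  next
    fix a
    assume "a \<in> {ser_add l p | l p. l \<in> Lhat \<and> p \<in> power_series_in z}"
    then obtain l p where "a = ser_add l p" "l \<in> Lhat" "p \<in> power_series_in z"
      by blast
    then have "ser_bracket z a = ser_bracket z l"
      using ser_bracket_power_series_eq_0[OF homog_lie_homogeneous[OF z(1)]]
      by (simp add: ser_add_def ser_bracket_add_right)
    then show "a \<in> {a. ser_bracket z a \<in> Lhat}"
      using ser_bracket_Lhat[OF z(1) \<open>l \<in> Lhat\<close>] by simp
  qed
qed

end
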